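(* Let $p\ge0$, $\Omega>0$, $S\in\mathcal B_\Omega$, $x\in[0,\pi]$, $f\in m$, and $q_{ni}(x)=(\tilde Q(x)T^{-1}f)_{ni}$. Then $\{q_{n0}(x)-q_{n1}(x)\}_{n\ge1}\in l_1$ and $$\sum_{n\ge1}|q_{n0}(x)-q_{n1}(x)|\le C\|f\|_m,$$ where $C$ depends only on $p$ and $\Omega$.
   Context: $\mathcal S_p$: collections $S=\{\lambda_n,\alpha_n\}_{n\ge1}$ of complex numbers with $\rho_n:=\sqrt{\lambda_n}$ ($\arg\rho_n\in[-\pi/2,\pi/2)$), $\rho_n=n-p-1+\varkappa_n$, $\alpha_n=2/\pi+\kappa_n$, $\{\varkappa_n\},\{\kappa_n\}\in l_2$. Model data: $\tilde\rho_n=0$ for $n\le p+1$, $\tilde\rho_n=n-p-1$ for $n\ge p+1$, $\tilde\lambda_n=\tilde\rho_n^2$; $\tilde\alpha_1=1/\pi$, $\tilde\alpha_n=0$ for $2\le n\le p+1$, $\tilde\alpha_n=2/\pi$ for $n\ge p+2$. $\xi_n=|\rho_n-\tilde\rho_n|+|\alpha_n-\tilde\alpha_n|$, $\mathcal B_\Omega=\{S\in\mathcal S_p:(\sum\xi_n^2)^{1/2}\le\Omega\}$. Notation: $\lambda_{n0}=\lambda_n,\rho_{n0}=\rho_n,\alpha_{n0}=\alpha_n$, $\lambda_{n1}=\tilde\lambda_n,\rho_{n1}=\tilde\rho_n,\alpha_{n1}=\tilde\alpha_n$, $\hat\rho_n=\rho_n-\tilde\rho_n$; $\tilde D(x,\lambda,\mu)=\int_0^x\cos(\sqrt\lambda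 t)\cos(\sqrt\mu t)dt$; $\tilde Q_{ni,kj}(x)=\alpha_{kj}\tilde D(x,\rho_{ni}^2,\rho_{kj}^2)$; $\tilde Q_{nk}=\begin{pmatrix}\tilde Q_{n0,k0}&-\tilde Q_{n0,k1}\\ \tilde Q_{n1,k0}&-\tilde Q_{n1,k1}\end{pmatrix}$; $T_k^{-1}=\begin{pmatrix}\hat\rho_k&1\\0&1\end{pmatrix}$. $m$: Banach space of bounded sequences $f=(f_{ni})_{n\ge1,i=0,1}$ with sup norm. For $f\in m$, $(T^{-1}f)_n=(\hat\rho_nf_{n0}+f_{n1},f_{n1})^T$ and $(\tilde Q(x)T^{-1}f)_n=\sum_{k\ge1}\tilde Q_{nk}(x)T_k^{-1}f_k$, $f_k=(f_{k0},f_{k1})^T$; $(\cdot)_{ni}$ denotes the $i$-th component of the $n$-th block. *)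

theory Defs
  imports "HOL-Analysis.Analysis"
begin

text \<open>Square root with the paper's branch: arg in [-pi/2, pi/2).
  Library csqrt has arg in (-pi/2, pi/2]; we flip the purely imaginary upper case.\<close>
definition psqrt :: "complex \<Rightarrow> complex" where
  "psqrt z = (if Re (csqrt z) = 0 \<and> Im (csqrt z) > 0 then - csqrt z else csqrt z)"

definition rho_t :: "nat \<Rightarrow> nat \<Rightarrow> real" where
  "rho_t p n = (if n \<le> p + 1 then 0 else real n - real p - 1)"

definition alpha_t :: "nat \<Rightarrow> nat \<Rightarrow> real" where
  "alpha_t p n = (if n = 1 then 1 / pi else if n \<le> p + 1 then 0 else 2 / pi)"

definition in_Sp :: "nat \<Rightarrow> (nat \<Rightarrow> complex) \<Rightarrow> (nat \<Rightarrow> complex) \<Rightarrow> bool" where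
  "in_Sp p lam al \<longleftrightarrow>
     (\<lambda>n. (norm (psqrt (lam n) - complex_of_real (real n - real p - 1)))\<^sup>2) summable_on {1..} \<and>
     (\<lambda>n. (norm (al n - complex_of_real (2 / pi)))\<^sup>2) summable_on {1..}"

definition xi :: "nat \<Rightarrow> (nat \<Rightarrow> complex) \<Rightarrow> (nat \<Rightarrow> complex) \<Rightarrow> nat \<Rightarrow> real" where
  "xi p lam al n = norm (psqrt (lam n) - complex_of_real (rho_t p n))
                 + norm (al n - complex_of_real (alpha_t p n))"

definition in_B :: "nat \<Rightarrow> real \<Rightarrow> (nat \<Rightarrow> complex) \<Rightarrow> (nat \<Rightarrow> complex) \<Rightarrow> bool" where
  "in_B p \<Omega> lam al \<longleftrightarrow> in_Sp p lam al \<and>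
     sqrt (\<Sum>\<^sub>\<infinity>n\<in>{1..}. (xi p lam al n)\<^sup>2) \<le> \<Omega>"

text \<open>lamS/rhoS/alS p lam al i n: lambda_{ni}, rho_{ni}, alpha_{ni} (i = 0: data, i = 1: model).\<close>
definition lamS :: "nat \<Rightarrow> (nat \<Rightarrow> complex) \<Rightarrow> nat \<Rightarrow> nat \<Rightarrow> complex" where
  "lamS p lam i n = (if i = 0 then lam n else complex_of_real ((rho_t p n)\<^sup>2))"

definition alS :: "nat \<Rightarrow> (nat \<Rightarrow> complex) \<Rightarrow> nat \<Rightarrow> nat \<Rightarrow> complex" where
  "alS p al i n = (if i = 0 then al n else complex_of_real (alpha_t p n))"

definition rho_hat :: "nat \<Rightarrow> (nat \<Rightarrow> complex) \<Rightarrow> nat \<Rightarrow> complex" where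
  "rho_hat p lam n = psqrt (lam n) - complex_of_real (rho_t p n)"

definition Dt :: "real \<Rightarrow> complex \<Rightarrow> complex \<Rightarrow> complex" where
  "Dt x l m = integral {0..x}
      (\<lambda>t. cos (psqrt l * complex_of_real t) * cos (psqrt m * complex_of_real t))"

definition Qt :: "nat \<Rightarrow> (nat \<Rightarrow> complex) \<Rightarrow> (nat \<Rightarrow> complex) \<Rightarrow> real
                  \<Rightarrow> nat \<Rightarrow> nat \<Rightarrow> nat \<Rightarrow> nat \<Rightarrow> complex" where
  "Qt p lam al x n i k j = alS p al j k * Dt x (lamS p lam i n) (lamS p lam j k)"

text \<open>(Q~(x) T^{-1} f)_{ni} = sum_{k>=1} [Q~_{ni,k0}(rho_hat_k f_{k0} + f_{k1}) - Q~_{ni,k1} f_{k1}].\<close>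
definition qQT :: "nat \<Rightarrow> (nat \<Rightarrow> complex) \<Rightarrow> (nat \<Rightarrow> complex) \<Rightarrow> real
                   \<Rightarrow> (nat \<Rightarrow> complex) \<Rightarrow> (nat \<Rightarrow> complex) \<Rightarrow> nat \<Rightarrow> nat \<Rightarrow> complex" where
  "qQT p lam al x f0 f1 n i =
     (\<Sum>\<^sub>\<infinity>k\<in>{1..}. Qt p lam al x n i k 0 * (rho_hat p lam k * f0 k + f1 k)
                 - Qt p lam al x n i k 1 * f1 k)"

definition in_m :: "(nat \<Rightarrow> complex) \<Rightarrow> (nat \<Rightarrow> complex) \<Rightarrow> bool" where
  "in_m f0 f1 \<longleftrightarrow> bdd_above ((\<lambda>n. norm (f0 n)) ` {1..}) \<and> bdd_above ((\<lambda>n. norm (f1 n)) ` {1..})"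

definition m_norm :: "(nat \<Rightarrow> complex) \<Rightarrow> (nat \<Rightarrow> complex) \<Rightarrow> real" where
  "m_norm f0 f1 = (SUP n\<in>{1..}. max (norm (f0 n)) (norm (f1 n)))"

end

theory Submission
  imports Defs
begin

text \<open>
  The difference q_{n0} - q_{n1} is the integral over [0, x] of (cos (rho_n t) - cos (rho~_n t)) H t,
  where H = sum_k (alpha_{k0} (T^-1 f)_{k0} cos (rho_k t) - alpha_{k1} (T^-1 f)_{k1} cos (rho~_k t)).
  Expanding cos (rho_n t) to second order around the integer frequency rho~_n, the first-order term
  is rho^_n times the Fourier coefficient of t H against sin (rho~_n t). These coefficients are
  square-summable by Bessel's inequality for the orthogonal system sin (j t) on [0, pi], and a
  weighted AM-GM inequality pairs them with the square-summable rho^_n; the second-order remainder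
  is O(|rho^_n|^2), hence summable. This bounds the sum by the L1 and L2 norms of H on [0, x].
  The same expansion applied to the summands of H, now with Bessel's inequality for cos (j t) for
  the zeroth-order terms, bounds the L2 norm of H by a multiple of the norm of f in m.
\<close>

section \<open>Orthogonality and Bessel's inequality on [0, pi]\<close>

lemma integrable_on_subinterval_0_pi:
  fixes f :: "real \<Rightarrow> 'a::banach"
  shows "continuous_on {0..pi} f \<Longrightarrow> x \<in> {0..pi} \<Longrightarrow> f integrable_on {0..x}"
  by (rule integrable_continuous_interval) (auto elim: continuous_on_subset)

lemma integral_Re:
  "f integrable_on S \<Longrightarrow> integral S (\<lambda>t. Re (f t)) = Re (integral S f)"
  by (intro integral_unique has_integral_Re integrable_integral)

lemma norm_diff_square:
  "(norm (a - b))\<^sup>2 = (norm a)\<^sup>2 - 2 * Re (a * cnj b) + (norm (b :: complex))\<^sup>2"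
  unfolding cmod_power2 by (simp add: power2_eq_square algebra_simps)

lemma Re_mult_cnj_self: "Re (a * cnj a) = (norm a)\<^sup>2"
  unfolding cmod_power2 by (simp add: power2_eq_square)

lemma norm_sum_of_real_square:
  fixes c :: "nat \<Rightarrow> complex" and g :: "nat \<Rightarrow> real"
  shows "(norm (\<Sum>k\<in>K. c k * of_real (g k)))\<^sup>2 = (\<Sum>k\<in>K. \<Sum>l\<in>K. Re (c k * cnj (c l)) * (g k * g l))"
proof -
  have "complex_of_real ((norm (\<Sum>k\<in>K. c k * of_real (g k)))\<^sup>2) =
      (\<Sum>k\<in>K. c k * of_real (g k)) * cnj (\<Sum>k\<in>K. c k * of_real (g k))"
    by (rule complex_norm_square)
  also have "\<dots> = (\<Sum>k\<in>K. \<Sum>l\<in>K. (c k * of_real (g k)) * cnj (c l * of_real (g l)))"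
    by (simp add: cnj_sum sum_product)
  finally have "(norm (\<Sum>k\<in>K. c k * of_real (g k)))\<^sup>2 =
      Re (\<Sum>k\<in>K. \<Sum>l\<in>K. (c k * of_real (g k)) * cnj (c l * of_real (g l)))"
    by (metis Re_complex_of_real)
  then show ?thesis
    by (simp add: Re_sum algebra_simps)
qed

lemma integral_cos_int_mult_0_pi:
  fixes m :: int
  shows "integral {0..pi} (\<lambda>t. cos (of_int m * t)) = (if m = 0 then pi else 0)"
proof (cases "m = 0")
  case False
  have "((\<lambda>t. cos (of_int m * t)) has_integral sin (of_int m * pi) / m - sin (of_int m * 0) / m) {0..pi}"
  proof (rule fundamental_theorem_of_calculus)
    show "((\<lambda>t. sin (of_int m * t) / m) has_vector_derivative cos (of_int m * t)) (at t within {0..pi})" for t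
      unfolding has_real_derivative_iff_has_vector_derivative[symmetric]
      using False by (auto intro!: derivative_eq_intros)
  qed simp
  then show ?thesis
    using False by (simp add: integral_unique mult.commute[of _ pi])
qed simp

lemma integral_cos_cos_0_pi:
  fixes j l :: nat
  assumes "1 \<le> j" "1 \<le> l"
  shows "integral {0..pi} (\<lambda>t. cos (j * t) * cos (l * t)) = (if j = l then pi / 2 else 0)"
proof -
  have i: "(\<lambda>t. cos (of_int m * t) / 2) integrable_on {0..pi}" for m :: int
    by (intro integrable_continuous_interval continuous_intros) auto
  have "(\<lambda>t::real. cos (j * t) * cos (l * t)) =
      (\<lambda>t. cos (of_int (int j - int l) * t) / 2 + cos (of_int (int j + int l) * t) / 2)"
    by (simp add: cos_times_cos algebra_simps add_divide_distrib)
  then show ?thesis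
    using assms by (simp only: integral_add[OF i i] integral_divide integral_cos_int_mult_0_pi) auto
qed

lemma integral_sin_sin_0_pi:
  fixes j l :: nat
  assumes "1 \<le> j" "1 \<le> l"
  shows "integral {0..pi} (\<lambda>t. sin (j * t) * sin (l * t)) = (if j = l then pi / 2 else 0)"
proof -
  have i: "(\<lambda>t. cos (of_int m * t) / 2) integrable_on {0..pi}" for m :: int
    by (intro integrable_continuous_interval continuous_intros) auto
  have "(\<lambda>t::real. sin (j * t) * sin (l * t)) =
      (\<lambda>t. cos (of_int (int j - int l) * t) / 2 - cos (of_int (int j + int l) * t) / 2)"
    by (simp add: sin_times_sin algebra_simps diff_divide_distrib)
  then show ?thesis
    using assms by (simp only: integral_diff[OF i i] integral_divide integral_cos_int_mult_0_pi) auto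
qed

lemma integral_norm_orthogonal_sum_square:
  fixes \<phi> :: "nat \<Rightarrow> real \<Rightarrow> real" and c :: "nat \<Rightarrow> complex"
  assumes "finite K"
    and orth: "\<And>k l. k \<in> K \<Longrightarrow> l \<in> K \<Longrightarrow>
        integral {0..pi} (\<lambda>t. \<phi> k t * \<phi> l t) = (if k = l then pi / 2 else 0)"
    and cont: "\<And>k. k \<in> K \<Longrightarrow> continuous_on {0..pi} (\<phi> k)"
  shows "integral {0..pi} (\<lambda>t. (norm (\<Sum>k\<in>K. c k * of_real (\<phi> k t)))\<^sup>2)
         = pi / 2 * (\<Sum>k\<in>K. (norm (c k))\<^sup>2)"
proof -
  have int: "(\<lambda>t. a * (\<phi> k t * \<phi> l t)) integrable_on {0..pi}" if "k \<in> K" "l \<in> K" for a k l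
    using that by (intro integrable_continuous_interval continuous_intros cont)
  have "integral {0..pi} (\<lambda>t. (norm (\<Sum>k\<in>K. c k * of_real (\<phi> k t)))\<^sup>2)
      = integral {0..pi} (\<lambda>t. \<Sum>k\<in>K. \<Sum>l\<in>K. Re (c k * cnj (c l)) * (\<phi> k t * \<phi> l t))"
    by (simp only: norm_sum_of_real_square)
  also have "\<dots> = (\<Sum>k\<in>K. \<Sum>l\<in>K. Re (c k * cnj (c l)) * integral {0..pi} (\<lambda>t. \<phi> k t * \<phi> l t))"
    using assms(1) int by (simp add: integral_sum integrable_sum)
  also have "\<dots> = (\<Sum>k\<in>K. \<Sum>l\<in>K. if k = l then Re (c k * cnj (c l)) * (pi / 2) else 0)"
    by (intro sum.cong refl) (simp add: orth)
  also have "\<dots> = (\<Sum>k\<in>K. Re (c k * cnj (c k)) * (pi / 2))"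
    using assms(1) by simp
  also have "\<dots> = pi / 2 * (\<Sum>k\<in>K. (norm (c k))\<^sup>2)"
    by (simp only: Re_mult_cnj_self sum_distrib_left mult.commute)
  finally show ?thesis .
qed

lemma integral_norm_orthogonal_sum_square_le:
  fixes \<phi> :: "nat \<Rightarrow> real \<Rightarrow> real" and c :: "nat \<Rightarrow> complex"
  assumes "finite K"
    and "\<And>k l. k \<in> K \<Longrightarrow> l \<in> K \<Longrightarrow>
        integral {0..pi} (\<lambda>t. \<phi> k t * \<phi> l t) = (if k = l then pi / 2 else 0)"
    and "\<And>k. k \<in> K \<Longrightarrow> continuous_on {0..pi} (\<phi> k)" and "x \<in> {0..pi}"
  shows "integral {0..x} (\<lambda>t. (norm (\<Sum>k\<in>K. c k * of_real (\<phi> k t)))\<^sup>2) \<le> pi / 2 * (\<Sum>k\<in>K. (norm (c k))\<^sup>2)"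
proof -
  have "integral {0..x} (\<lambda>t. (norm (\<Sum>k\<in>K. c k * of_real (\<phi> k t)))\<^sup>2)
      \<le> integral {0..pi} (\<lambda>t. (norm (\<Sum>k\<in>K. c k * of_real (\<phi> k t)))\<^sup>2)"
    using assms
    by (intro integral_subset_le integrable_on_subinterval_0_pi integrable_continuous_interval continuous_intros)
      auto
  also have "\<dots> = pi / 2 * (\<Sum>k\<in>K. (norm (c k))\<^sup>2)"
    using assms by (intro integral_norm_orthogonal_sum_square)
  finally show ?thesis .
qed

lemma integral_Re_mult_cnj_sum:
  fixes h :: "real \<Rightarrow> complex" and \<phi> :: "nat \<Rightarrow> real \<Rightarrow> real"
  assumes "finite K" "\<And>k. k \<in> K \<Longrightarrow> (\<lambda>t. h t * of_real (\<phi> k t)) integrable_on S"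
  shows "integral S (\<lambda>t. Re (h t * cnj (\<Sum>k\<in>K. c k * of_real (\<phi> k t))))
    = (\<Sum>k\<in>K. Re (cnj (c k) * integral S (\<lambda>t. h t * of_real (\<phi> k t))))"
proof -
  have "Re (h t * cnj (\<Sum>k\<in>K. c k * of_real (\<phi> k t))) = (\<Sum>k\<in>K. Re (cnj (c k) * (h t * of_real (\<phi> k t))))" for t
    by (simp add: cnj_sum sum_distrib_left Re_sum algebra_simps)
  then have "integral S (\<lambda>t. Re (h t * cnj (\<Sum>k\<in>K. c k * of_real (\<phi> k t))))
      = (\<Sum>k\<in>K. integral S (\<lambda>t. Re (cnj (c k) * (h t * of_real (\<phi> k t)))))"
    using assms(1) has_integral_Re[OF integrable_integral[OF integrable_on_mult_right[OF assms(2)]]]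
    by (simp only:) (intro integral_sum has_integral_integrable)
  also have "\<dots> = (\<Sum>k\<in>K. Re (cnj (c k) * integral S (\<lambda>t. h t * of_real (\<phi> k t))))"
    by (intro sum.cong refl)
      (simp only: integral_Re[OF integrable_on_mult_right[OF assms(2)]] integral_mult_right)
  finally show ?thesis .
qed

lemma bessel_inequality_0_pi:
  fixes \<phi> :: "nat \<Rightarrow> real \<Rightarrow> real" and h :: "real \<Rightarrow> complex"
  assumes fin: "finite K"
    and orth: "\<And>k l. k \<in> K \<Longrightarrow> l \<in> K \<Longrightarrow>
        integral {0..pi} (\<lambda>t. \<phi> k t * \<phi> l t) = (if k = l then pi / 2 else 0)"
    and cont: "\<And>k. k \<in> K \<Longrightarrow> continuous_on {0..pi} (\<phi> k)"
    and hc: "continuous_on {0..pi} h" and x: "x \<in> {0..pi}"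
  shows "(\<Sum>k\<in>K. (norm (integral {0..x} (\<lambda>t. h t * of_real (\<phi> k t))))\<^sup>2)
         \<le> pi / 2 * integral {0..x} (\<lambda>t. (norm (h t))\<^sup>2)"
proof -
  define \<beta> where "\<beta> k = integral {0..x} (\<lambda>t. h t * of_real (\<phi> k t))" for k
  define S where "S = (\<Sum>k\<in>K. (norm (\<beta> k))\<^sup>2)"
  \<comment> \<open>the projection of h, cut off at x, onto the span of the \<phi> k in L2 [0, pi]\<close>
  define s where "s t = (\<Sum>k\<in>K. (2 / pi * \<beta> k) * of_real (\<phi> k t))" for t
  have sc: "continuous_on {0..pi} s"
    unfolding s_def by (intro continuous_intros cont)
  note int_x = integrable_on_subinterval_0_pi[OF _ x]
  have "integral {0..x} (\<lambda>t. Re (h t * cnj (s t)))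
      = (\<Sum>k\<in>K. Re (cnj (2 / pi * \<beta> k) * integral {0..x} (\<lambda>t. h t * of_real (\<phi> k t))))"
    unfolding s_def using fin hc cont by (intro integral_Re_mult_cnj_sum int_x continuous_intros)
  also have "\<dots> = 2 / pi * S"
  proof -
    have "Re (cnj (2 / pi * \<beta> k) * \<beta> k) = 2 / pi * (norm (\<beta> k))\<^sup>2" for k
      unfolding cmod_power2 by (simp add: power2_eq_square algebra_simps add_divide_distrib)
    then show ?thesis
      unfolding S_def \<beta>_def[symmetric] by (simp add: sum_distrib_left)
  qed
  finally have mixed: "integral {0..x} (\<lambda>t. Re (h t * cnj (s t))) = 2 / pi * S" .
  have "integral {0..x} (\<lambda>t. (norm (s t))\<^sup>2) \<le> pi / 2 * (\<Sum>k\<in>K. (norm (2 / pi * \<beta> k))\<^sup>2)"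
    unfolding s_def by (rule integral_norm_orthogonal_sum_square_le[OF fin orth cont x])
  also have "\<dots> = 2 / pi * S"
  proof -
    have "norm (2 / pi * \<beta> k) = 2 / pi * norm (\<beta> k)" for k
      by (simp add: norm_mult norm_divide)
    then show ?thesis
      by (simp only:) (simp add: S_def power_mult_distrib sum_distrib_left power2_eq_square)
  qed
  finally have square: "integral {0..x} (\<lambda>t. (norm (s t))\<^sup>2) \<le> 2 / pi * S" .
  have "0 \<le> integral {0..x} (\<lambda>t. (norm (h t - s t))\<^sup>2)"
    by (intro integral_nonneg int_x continuous_intros hc sc) simp
  also have "\<dots> = integral {0..x} (\<lambda>t. (norm (h t))\<^sup>2)
      - 2 * integral {0..x} (\<lambda>t. Re (h t * cnj (s t))) + integral {0..x} (\<lambda>t. (norm (s t))\<^sup>2)"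
    unfolding norm_diff_square
    by (simp add: integral_add integral_diff int_x continuous_intros hc sc del: integral_mult)
  finally have "2 / pi * S \<le> integral {0..x} (\<lambda>t. (norm (h t))\<^sup>2)"
    using mixed square by linarith
  then show ?thesis
    unfolding S_def \<beta>_def by (simp add: field_simps)
qed

lemma norm_cos_sub_one_le:
  fixes w :: complex
  shows "norm (cos w - 1) \<le> exp (norm w) * (norm w)\<^sup>2"
proof -
  have "norm (cos w - (\<Sum>k\<le>1. complex_of_real (cos_coeff k) * w ^ k)) \<le> exp \<bar>Im w\<bar> * (norm w)\<^sup>2"
    using Taylor_cos[of w 1] by (simp add: power2_eq_square)
  moreover have "(\<Sum>k\<le>1. complex_of_real (cos_coeff k) * w ^ k) = 1"
    by (simp add: cos_coeff_def)
  moreover have "exp \<bar>Im w\<bar> \<le> exp (norm w)"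
    using abs_Im_le_cmod by simp
  ultimately show ?thesis
    by (smt (verit) mult_right_mono zero_le_power2)
qed

lemma norm_sin_sub_le:
  fixes w :: complex
  shows "norm (sin w - w) \<le> exp (norm w) * (norm w)\<^sup>2"
proof -
  have "norm (sin w - (\<Sum>k\<le>1. complex_of_real (sin_coeff k) * w ^ k)) \<le> exp \<bar>Im w\<bar> * (norm w)\<^sup>2"
    using Taylor_sin[of w 1] by (simp add: power2_eq_square)
  moreover have "(\<Sum>k\<le>1. complex_of_real (sin_coeff k) * w ^ k) = w"
    by (simp add: sin_coeff_def)
  moreover have "exp \<bar>Im w\<bar> \<le> exp (norm w)"
    using abs_Im_le_cmod by simp
  ultimately show ?thesis
    by (smt (verit) mult_right_mono zero_le_power2)
qed

lemma norm_cos_add_taylor1_le: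
  fixes a :: real and w :: complex
  shows "norm (cos (of_real a + w) - cos (of_real a) + w * sin (of_real a)) \<le> 2 * exp (norm w) * (norm w)\<^sup>2"
proof -
  have "cos (of_real a + w) - cos (of_real a) + w * sin (of_real a) =
     of_real (cos a) * (cos w - 1) - of_real (sin a) * (sin w - w)"
    by (simp add: cos_add algebra_simps flip: cos_of_real sin_of_real)
  also have "norm \<dots> \<le> norm (of_real (cos a) * (cos w - 1)) + norm (of_real (sin a) * (sin w - w))"
    by (rule norm_triangle_ineq4)
  also have "\<dots> = \<bar>cos a\<bar> * norm (cos w - 1) + \<bar>sin a\<bar> * norm (sin w - w)"
    by (simp add: norm_mult)
  also have "\<dots> \<le> 1 * (exp (norm w) * (norm w)\<^sup>2) + 1 * (exp (norm w) * (norm w)\<^sup>2)"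
    by (intro add_mono mult_mono abs_cos_le_one abs_sin_le_one norm_cos_sub_one_le norm_sin_sub_le) auto
  finally show ?thesis
    by simp
qed

lemma mult_le_weighted_squares:
  fixes a b \<mu> :: real
  assumes "\<mu> > 0"
  shows "a * b \<le> \<mu> / 2 * a\<^sup>2 + b\<^sup>2 / (2 * \<mu>)"
proof -
  have "0 \<le> (\<mu> * a - b)\<^sup>2"
    by simp
  then have "2 * \<mu> * (a * b) \<le> \<mu> * \<mu> * a\<^sup>2 + b\<^sup>2"
    by (simp add: power2_eq_square algebra_simps)
  then show ?thesis
    using assms by (simp add: field_simps power2_eq_square)
qed

lemma sum_mult_le_weighted_squares:
  fixes a b :: "'a \<Rightarrow> real"
  assumes "\<mu> > 0" "(\<Sum>k\<in>K. (a k)\<^sup>2) \<le> A"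
  shows "(\<Sum>k\<in>K. a k * b k) \<le> \<mu> / 2 * A + (\<Sum>k\<in>K. (b k)\<^sup>2) / (2 * \<mu>)"
proof -
  have "(\<Sum>k\<in>K. a k * b k) \<le> (\<Sum>k\<in>K. \<mu> / 2 * (a k)\<^sup>2 + (b k)\<^sup>2 / (2 * \<mu>))"
    using assms by (intro sum_mono mult_le_weighted_squares)
  also have "\<dots> = \<mu> / 2 * (\<Sum>k\<in>K. (a k)\<^sup>2) + (\<Sum>k\<in>K. (b k)\<^sup>2) / (2 * \<mu>)"
    by (simp add: sum.distrib sum_distrib_left sum_divide_distrib)
  also have "\<dots> \<le> \<mu> / 2 * A + (\<Sum>k\<in>K. (b k)\<^sup>2) / (2 * \<mu>)"
    using assms by (intro add_right_mono mult_left_mono) auto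
  finally show ?thesis .
qed

lemma integral_norm_le_weighted_squares:
  fixes h :: "real \<Rightarrow> complex"
  assumes "continuous_on {0..pi} h" "x \<in> {0..pi}" "F > 0"
  shows "integral {0..x} (\<lambda>t. norm (h t)) \<le> pi * (F / 2) + integral {0..x} (\<lambda>t. (norm (h t))\<^sup>2) / (2 * F)"
proof -
  have "integral {0..x} (\<lambda>t. norm (h t)) \<le> integral {0..x} (\<lambda>t. F / 2 + (norm (h t))\<^sup>2 / (2 * F))"
    using assms mult_le_weighted_squares[OF assms(3), of 1]
    by (intro integral_le integrable_on_subinterval_0_pi continuous_intros) auto
  also have "\<dots> = x * (F / 2) + integral {0..x} (\<lambda>t. (norm (h t))\<^sup>2) / (2 * F)"
    using assms by (simp add: integral_add integrable_on_subinterval_0_pi continuous_intros)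
  also have "\<dots> \<le> pi * (F / 2) + integral {0..x} (\<lambda>t. (norm (h t))\<^sup>2) / (2 * F)"
    using assms by (intro add_right_mono mult_right_mono) auto
  finally show ?thesis .
qed

lemma norm_add4_square_le:
  fixes a b c d :: "'a::real_normed_vector"
  shows "(norm (a + b + c + d))\<^sup>2 \<le> 4 * ((norm a)\<^sup>2 + (norm b)\<^sup>2 + (norm c)\<^sup>2 + (norm d)\<^sup>2)"
proof -
  have "norm (a + b + c + d) \<le> norm a + norm b + norm c + norm d"
    by (smt (verit) norm_triangle_ineq)
  then have "(norm (a + b + c + d))\<^sup>2 \<le> (norm a + norm b + norm c + norm d)\<^sup>2"
    by (intro power_mono) auto
  also have "\<dots> \<le> 4 * ((norm a)\<^sup>2 + (norm b)\<^sup>2 + (norm c)\<^sup>2 + (norm d)\<^sup>2)"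
  proof -
    have "0 \<le> (norm a - norm b)\<^sup>2 + (norm a - norm c)\<^sup>2 + (norm a - norm d)\<^sup>2 + (norm b - norm c)\<^sup>2
      + (norm b - norm d)\<^sup>2 + (norm c - norm d)\<^sup>2"
      by simp
    then show ?thesis
      by (simp add: power2_eq_square algebra_simps)
  qed
  finally show ?thesis .
qed

lemma integral_le_pi_mult_bound:
  fixes f :: "real \<Rightarrow> real"
  assumes "continuous_on {0..pi} f" "\<And>t. t \<in> {0..pi} \<Longrightarrow> f t \<le> B" "x \<in> {0..pi}" "0 \<le> B"
  shows "integral {0..x} f \<le> pi * B"
proof -
  have "integral {0..x} f \<le> integral {0..x} (\<lambda>t. B)"
    using assms by (intro integral_le integrable_on_subinterval_0_pi) auto
  also have "\<dots> \<le> pi * B"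
    using assms(3,4) by (simp add: mult_right_mono)
  finally show ?thesis .
qed

lemma sum_split_at:
  fixes K :: "'a::linorder set"
  assumes "finite K"
  shows "(\<Sum>k\<in>K. f k) = (\<Sum>k\<in>{k\<in>K. k \<le> m}. f k) + (\<Sum>k\<in>{k\<in>K. m < k}. f k)"
proof -
  have "K = {k\<in>K. k \<le> m} \<union> {k\<in>K. m < k}"
    by auto
  moreover have "sum f ({k\<in>K. k \<le> m} \<union> {k\<in>K. m < k}) = sum f {k\<in>K. k \<le> m} + sum f {k\<in>K. m < k}"
    using assms by (intro sum.union_disjoint) auto
  ultimately show ?thesis
    by simp
qed

lemma card_filter_atMost_le:
  assumes "K \<subseteq> {1..}"
  shows "card {k\<in>K. k \<le> m} \<le> m"
proof -
  have "card {k\<in>K. k \<le> m} \<le> card {1..m}"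
    using assms by (intro card_mono) auto
  then show ?thesis
    by simp
qed

lemma nonneg_finite_sums_bounded_summable:
  fixes q :: "'a \<Rightarrow> real"
  assumes "\<And>n. n \<in> A \<Longrightarrow> 0 \<le> q n"
    and "\<And>N. finite N \<Longrightarrow> N \<subseteq> A \<Longrightarrow> (\<Sum>n\<in>N. q n) \<le> B"
  shows "q summable_on A" and "(\<Sum>\<^sub>\<infinity>n\<in>A. q n) \<le> B"
proof -
  show "q summable_on A"
    using assms by (intro nonneg_bdd_above_summable_on bdd_aboveI2[where M = B]) auto
  then show "(\<Sum>\<^sub>\<infinity>n\<in>A. q n) \<le> B"
    using assms(2) by (rule infsum_le_finite_sums)
qed

lemma sum_norm_infsum_diff_le:
  fixes T0 T1 :: "'n \<Rightarrow> 'k \<Rightarrow> 'a::real_normed_vector"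
  assumes "\<And>n. T0 n summable_on A" "\<And>n. T1 n summable_on A"
    and "\<And>K. finite K \<Longrightarrow> K \<subseteq> A \<Longrightarrow> (\<Sum>n\<in>N. norm (sum (T0 n) K - sum (T1 n) K)) \<le> B"
  shows "(\<Sum>n\<in>N. norm (infsum (T0 n) A - infsum (T1 n) A)) \<le> B"
proof (rule tendsto_upperbound[OF _ _ finite_subsets_at_top_neq_bot])
  show "((\<lambda>K. \<Sum>n\<in>N. norm (sum (T0 n) K - sum (T1 n) K)) \<longlongrightarrow> (\<Sum>n\<in>N. norm (infsum (T0 n) A - infsum (T1 n) A)))
      (finite_subsets_at_top A)"
    using assms(1,2) by (intro tendsto_sum tendsto_norm tendsto_diff infsum_tendsto)
  show "\<forall>\<^sub>F K in finite_subsets_at_top A. (\<Sum>n\<in>N. norm (sum (T0 n) K - sum (T1 n) K)) \<le> B"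
    using assms(3) by (intro eventually_finite_subsets_at_top_weakI)
qed

section \<open>The model frequencies\<close>

lemma rho_t_eq: "rho_t p k = real (k - (p + 1))"
  unfolding rho_t_def by (auto simp: of_nat_diff)

lemma rho_t_eq_0: "k \<le> p + 1 \<Longrightarrow> rho_t p k = 0"
  unfolding rho_t_def by simp

lemma rho_t_nonneg: "0 \<le> rho_t p k"
  unfolding rho_t_eq by simp

lemma integral_cos_rho_t_orthogonal:
  assumes "p + 1 < k" "p + 1 < l"
  shows "integral {0..pi} (\<lambda>t. cos (rho_t p k * t) * cos (rho_t p l * t)) = (if k = l then pi / 2 else 0)"
proof -
  have "k - (p + 1) = l - (p + 1) \<longleftrightarrow> k = l"
    using assms by auto
  then show ?thesis
    using assms integral_cos_cos_0_pi[of "k - (p + 1)" "l - (p + 1)"] by (simp add: rho_t_eq)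
qed

lemma integral_sin_rho_t_orthogonal:
  assumes "p + 1 < k" "p + 1 < l"
  shows "integral {0..pi} (\<lambda>t. sin (rho_t p k * t) * sin (rho_t p l * t)) = (if k = l then pi / 2 else 0)"
proof -
  have "k - (p + 1) = l - (p + 1) \<longleftrightarrow> k = l"
    using assms by auto
  then show ?thesis
    using assms integral_sin_sin_0_pi[of "k - (p + 1)" "l - (p + 1)"] by (simp add: rho_t_eq)
qed

lemma bessel_inequality_rho_t_cos:
  fixes h :: "real \<Rightarrow> complex"
  assumes "finite K" "continuous_on {0..pi} h" "x \<in> {0..pi}"
  shows "(\<Sum>k\<in>{k\<in>K. p + 1 < k}. (norm (integral {0..x} (\<lambda>t. h t * of_real (cos (rho_t p k * t)))))\<^sup>2)
        \<le> pi / 2 * integral {0..x} (\<lambda>t. (norm (h t))\<^sup>2)"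
  using assms
  by (intro bessel_inequality_0_pi[where \<phi> = "\<lambda>k t. cos (rho_t p k * t)"]
      integral_cos_rho_t_orthogonal continuous_intros) auto

lemma bessel_inequality_rho_t_sin:
  fixes h :: "real \<Rightarrow> complex"
  assumes "finite K" and hc: "continuous_on {0..pi} h" and x: "x \<in> {0..pi}"
  shows "(\<Sum>k\<in>{k\<in>K. p + 1 < k}. (norm (integral {0..x} (\<lambda>t. h t * of_real (t * sin (rho_t p k * t)))))\<^sup>2)
        \<le> pi ^ 3 / 2 * integral {0..x} (\<lambda>t. (norm (h t))\<^sup>2)"
proof -
  have "(\<Sum>k\<in>{k\<in>K. p + 1 < k}. (norm (integral {0..x} (\<lambda>t. h t * of_real (t * sin (rho_t p k * t)))))\<^sup>2)
     = (\<Sum>k\<in>{k\<in>K. p + 1 < k}. (norm (integral {0..x} (\<lambda>t. (of_real t * h t) * of_real (sin (rho_t p k * t)))))\<^sup>2)"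
    by (simp add: ac_simps)
  also have "\<dots> \<le> pi / 2 * integral {0..x} (\<lambda>t. (norm (of_real t * h t))\<^sup>2)"
    using assms
    by (intro bessel_inequality_0_pi[where \<phi> = "\<lambda>k t. sin (rho_t p k * t)"]
        integral_sin_rho_t_orthogonal continuous_intros) auto
  also have "\<dots> \<le> pi / 2 * integral {0..x} (\<lambda>t. pi\<^sup>2 * (norm (h t))\<^sup>2)"
    using x by (intro mult_left_mono integral_le integrable_on_subinterval_0_pi continuous_intros hc)
      (auto simp: norm_mult power_mult_distrib intro!: mult_right_mono power_mono)
  finally show ?thesis
    by (simp add: power2_eq_square power3_eq_cube)
qed

lemma sum_norm_integral_rho_t_cos_square_le:
  fixes h :: "real \<Rightarrow> complex"
  assumes fin: "finite K" and K: "K \<subseteq> {1..}" and hc: "continuous_on {0..pi} h" and x: "x \<in> {0..pi}"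
  shows "(\<Sum>k\<in>K. (norm (integral {0..x} (\<lambda>t. h t * of_real (cos (rho_t p k * t)))))\<^sup>2)
         \<le> (real p + 1) * (integral {0..x} (\<lambda>t. norm (h t)))\<^sup>2 + pi / 2 * integral {0..x} (\<lambda>t. (norm (h t))\<^sup>2)"
    (is "sum ?f K \<le> _")
proof -
  define N1 where "N1 = integral {0..x} (\<lambda>t. norm (h t))"
  have "norm (integral {0..x} (\<lambda>t. h t * of_real (cos (rho_t p k * t)))) \<le> N1" for k
    unfolding N1_def using hc x
    by (intro integral_norm_bound_integral integrable_on_subinterval_0_pi continuous_intros)
      (auto simp: norm_mult abs_cos_le_one mult_left_le)
  then have "(\<Sum>k\<in>{k\<in>K. k \<le> p + 1}. (norm (integral {0..x} (\<lambda>t. h t * of_real (cos (rho_t p k * t)))))\<^sup>2)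
      \<le> (\<Sum>k\<in>{k\<in>K. k \<le> p + 1}. N1\<^sup>2)"
    by (intro sum_mono power_mono) auto
  also have "\<dots> \<le> (real p + 1) * N1\<^sup>2"
    using card_filter_atMost_le[OF K, of "p + 1"] by (simp add: mult_right_mono)
  finally show ?thesis
    using sum_split_at[OF fin, of ?f "p + 1"] bessel_inequality_rho_t_cos[OF fin hc x, of p]
    unfolding N1_def by linarith
qed

lemma sum_norm_integral_rho_t_sin_square_le:
  fixes h :: "real \<Rightarrow> complex"
  assumes fin: "finite K" and hc: "continuous_on {0..pi} h" and x: "x \<in> {0..pi}"
  shows "(\<Sum>k\<in>K. (norm (integral {0..x} (\<lambda>t. h t * of_real (t * sin (rho_t p k * t)))))\<^sup>2)
         \<le> pi ^ 3 / 2 * integral {0..x} (\<lambda>t. (norm (h t))\<^sup>2)"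
    (is "sum ?f K \<le> _")
proof -
  have "(\<Sum>k\<in>{k\<in>K. k \<le> p + 1}. ?f k) = 0"
    by (simp add: rho_t_eq_0)
  then show ?thesis
    using sum_split_at[OF fin, of ?f "p + 1"] bessel_inequality_rho_t_sin[OF fin hc x, of p] by linarith
qed

lemma sum_norm_integral_rho_t_square_le:
  fixes h :: "real \<Rightarrow> complex"
  assumes "finite K" "K \<subseteq> {1..}" "continuous_on {0..pi} h" "x \<in> {0..pi}"
  shows "(\<Sum>k\<in>K. (norm (integral {0..x} (\<lambda>t. h t * of_real (cos (rho_t p k * t)))))\<^sup>2)
         + (\<Sum>k\<in>K. (norm (integral {0..x} (\<lambda>t. h t * of_real (t * sin (rho_t p k * t)))))\<^sup>2)
         \<le> (real p + 1) * (integral {0..x} (\<lambda>t. norm (h t)))\<^sup>2 + pi ^ 3 * integral {0..x} (\<lambda>t. (norm (h t))\<^sup>2)"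
proof -
  have "0 \<le> integral {0..x} (\<lambda>t. (norm (h t))\<^sup>2)"
    using assms by (intro integral_nonneg integrable_on_subinterval_0_pi continuous_intros) auto
  moreover have "pi / 2 \<le> pi ^ 3 / 2"
    using power_increasing[of 1 3 pi] pi_ge_two by simp
  ultimately show ?thesis
    using sum_norm_integral_rho_t_cos_square_le[OF assms, of p]
      sum_norm_integral_rho_t_sin_square_le[OF assms(1,3,4), of p]
      mult_right_mono[of "pi / 2" "pi ^ 3 / 2" "integral {0..x} (\<lambda>t. (norm (h t))\<^sup>2)"]
    by linarith
qed

lemma integral_norm_sum_rho_t_cos_square_le:
  fixes c :: "nat \<Rightarrow> complex"
  assumes "finite K" "x \<in> {0..pi}"
  shows "integral {0..x} (\<lambda>t. (norm (\<Sum>k\<in>{k\<in>K. p + 1 < k}. c k * of_real (cos (rho_t p k * t))))\<^sup>2)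
         \<le> pi / 2 * (\<Sum>k\<in>{k\<in>K. p + 1 < k}. (norm (c k))\<^sup>2)"
  using assms
  by (intro integral_norm_orthogonal_sum_square_le[where \<phi> = "\<lambda>k t. cos (rho_t p k * t)"]
      integral_cos_rho_t_orthogonal continuous_intros) auto

lemma integral_norm_sum_rho_t_sin_square_le:
  fixes c :: "nat \<Rightarrow> complex"
  assumes "finite K" "x \<in> {0..pi}"
  shows "integral {0..x} (\<lambda>t. (norm (\<Sum>k\<in>{k\<in>K. p + 1 < k}. c k * of_real (sin (rho_t p k * t))))\<^sup>2)
         \<le> pi / 2 * (\<Sum>k\<in>{k\<in>K. p + 1 < k}. (norm (c k))\<^sup>2)"
  using assms
  by (intro integral_norm_orthogonal_sum_square_le[where \<phi> = "\<lambda>k t. sin (rho_t p k * t)"]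
      integral_sin_rho_t_orthogonal continuous_intros) auto

lemma integral_norm_t_sum_rho_t_sin_square_le:
  fixes c :: "nat \<Rightarrow> complex"
  assumes "finite K" and x: "x \<in> {0..pi}"
  shows "integral {0..x} (\<lambda>t. (norm (of_real t * (\<Sum>k\<in>{k\<in>K. p + 1 < k}. c k * of_real (sin (rho_t p k * t)))))\<^sup>2)
         \<le> pi ^ 3 / 2 * (\<Sum>k\<in>{k\<in>K. p + 1 < k}. (norm (c k))\<^sup>2)"
proof -
  define S where "S t = (\<Sum>k\<in>{k\<in>K. p + 1 < k}. c k * of_real (sin (rho_t p k * t)))" for t
  have "integral {0..x} (\<lambda>t. (norm (of_real t * S t))\<^sup>2) \<le> integral {0..x} (\<lambda>t. pi\<^sup>2 * (norm (S t))\<^sup>2)"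
    unfolding S_def using x
    by (intro integral_le integrable_on_subinterval_0_pi continuous_intros)
      (auto simp: norm_mult power_mult_distrib intro!: mult_right_mono power_mono)
  also have "\<dots> \<le> pi\<^sup>2 * (pi / 2 * (\<Sum>k\<in>{k\<in>K. p + 1 < k}. (norm (c k))\<^sup>2))"
    unfolding S_def using integral_norm_sum_rho_t_sin_square_le[OF assms] by (simp add: mult_left_mono)
  finally show ?thesis
    unfolding S_def by (simp add: power2_eq_square power3_eq_cube)
qed

section \<open>Perturbed frequencies\<close>

definition remainder_const :: "real \<Rightarrow> real" where
  "remainder_const \<Omega> = 2 * exp (\<Omega> * pi) * pi\<^sup>2"

lemma remainder_const_nonneg: "0 \<le> remainder_const \<Omega>"
  by (simp add: remainder_const_def)

definition l2_const :: "nat \<Rightarrow> real \<Rightarrow> real" where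
  "l2_const p \<Omega> = 4 * pi * ((pi\<^sup>2 + (real p + 1)\<^sup>2) * \<Omega>\<^sup>2 + (remainder_const \<Omega>)\<^sup>2 * \<Omega> ^ 4)"

lemma l2_const_ge:
  "4 * (pi / 2 * (\<Lambda>\<^sup>2 * \<Omega>\<^sup>2) + pi ^ 3 / 2 * (\<Lambda>\<^sup>2 * \<Omega>\<^sup>2)
      + pi * ((real p + 1) * (\<Lambda> * \<Omega>))\<^sup>2 + pi * (\<Lambda> * remainder_const \<Omega> * \<Omega>\<^sup>2)\<^sup>2)
    \<le> \<Lambda>\<^sup>2 * l2_const p \<Omega>"
proof -
  have "pi * 1 \<le> pi * pi\<^sup>2"
    using power_increasing[of 0 2 pi] pi_ge_two by (intro mult_left_mono) auto
  then have "pi / 2 + pi ^ 3 / 2 \<le> pi * pi\<^sup>2"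
    by (simp add: field_simps power3_eq_cube power2_eq_square)
  then have "(pi / 2 + pi ^ 3 / 2) * (\<Lambda>\<^sup>2 * \<Omega>\<^sup>2) \<le> pi * pi\<^sup>2 * (\<Lambda>\<^sup>2 * \<Omega>\<^sup>2)"
    by (intro mult_right_mono) auto
  then show ?thesis
    unfolding l2_const_def by (simp add: algebra_simps power2_eq_square power4_eq_xxxx)
qed

locale perturbed_frequencies =
  fixes p :: nat and \<Omega> :: real and \<rho> :: "nat \<Rightarrow> complex" and \<xi> :: "nat \<Rightarrow> real"
  assumes Omega_pos: "0 < \<Omega>"
    and norm_deviation_le_xi: "\<And>k. 1 \<le> k \<Longrightarrow> norm (\<rho> k - of_real (rho_t p k)) \<le> \<xi> k"
    and sum_xi_square_le: "\<And>K. finite K \<Longrightarrow> K \<subseteq> {1..} \<Longrightarrow> (\<Sum>k\<in>K. (\<xi> k)\<^sup>2) \<le> \<Omega>\<^sup>2"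
begin

definition dev :: "nat \<Rightarrow> complex" where
  "dev k = \<rho> k - of_real (rho_t p k)"

definition cos_remainder :: "nat \<Rightarrow> real \<Rightarrow> complex" where
  "cos_remainder k t = cos (\<rho> k * of_real t) - of_real (cos (rho_t p k * t))
     + dev k * of_real (t * sin (rho_t p k * t))"

lemma xi_nonneg: "1 \<le> k \<Longrightarrow> 0 \<le> \<xi> k"
  using norm_deviation_le_xi[of k] norm_ge_zero order_trans by blast

lemma xi_le_Omega:
  assumes "1 \<le> k"
  shows "\<xi> k \<le> \<Omega>"
proof -
  have "(\<xi> k)\<^sup>2 \<le> \<Omega>\<^sup>2"
    using sum_xi_square_le[of "{k}"] assms by simp
  then show ?thesis
    using Omega_pos xi_nonneg[OF assms] by (simp add: power2_le_iff_abs_le)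
qed

lemma norm_dev_le_xi: "1 \<le> k \<Longrightarrow> norm (dev k) \<le> \<xi> k"
  unfolding dev_def by (rule norm_deviation_le_xi)

lemma norm_dev_le_Omega: "1 \<le> k \<Longrightarrow> norm (dev k) \<le> \<Omega>"
  using norm_dev_le_xi xi_le_Omega order_trans by blast

lemma sum_dev_square_le:
  assumes "finite K" "K \<subseteq> {1..}"
  shows "(\<Sum>k\<in>K. (norm (dev k))\<^sup>2) \<le> \<Omega>\<^sup>2"
proof -
  have "(\<Sum>k\<in>K. (norm (dev k))\<^sup>2) \<le> (\<Sum>k\<in>K. (\<xi> k)\<^sup>2)"
    using assms by (intro sum_mono power_mono norm_dev_le_xi) auto
  then show ?thesis
    using sum_xi_square_le[OF assms] by linarith
qed

lemma continuous_on_cos_remainder: "continuous_on S (cos_remainder k)"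
  unfolding cos_remainder_def by (intro continuous_intros)

lemma norm_cos_remainder_le:
  assumes "1 \<le> k" "t \<in> {0..pi}"
  shows "norm (cos_remainder k t) \<le> remainder_const \<Omega> * (norm (dev k))\<^sup>2"
proof -
  define w where "w = dev k * of_real t"
  have t: "0 \<le> t" "t \<le> pi"
    using assms(2) by auto
  have "cos_remainder k t = cos (of_real (rho_t p k * t) + w) - cos (of_real (rho_t p k * t))
      + w * sin (of_real (rho_t p k * t))"
    unfolding cos_remainder_def w_def dev_def
    by (simp add: algebra_simps flip: cos_of_real sin_of_real)
  also have "norm \<dots> \<le> 2 * exp (norm w) * (norm w)\<^sup>2"
    by (rule norm_cos_add_taylor1_le)
  also have "\<dots> \<le> 2 * exp (\<Omega> * pi) * ((norm (dev k))\<^sup>2 * pi\<^sup>2)"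
  proof -
    have "norm w = norm (dev k) * t"
      using t by (simp add: w_def norm_mult)
    moreover have "norm (dev k) * t \<le> \<Omega> * pi"
      using norm_dev_le_Omega[OF assms(1)] t Omega_pos by (intro mult_mono) auto
    ultimately show ?thesis
      using t by (auto simp: power_mult_distrib intro!: mult_mono power_mono)
  qed
  finally show ?thesis
    by (simp add: remainder_const_def algebra_simps)
qed

lemma integral_perturbed_cos_eq:
  fixes h :: "real \<Rightarrow> complex"
  assumes hc: "continuous_on {0..pi} h" and x: "x \<in> {0..pi}"
  shows "integral {0..x} (\<lambda>t. h t * (a * cos (\<rho> k * of_real t) + b * of_real (cos (rho_t p k * t))))
     = (a + b) * integral {0..x} (\<lambda>t. h t * of_real (cos (rho_t p k * t)))
       - a * dev k * integral {0..x} (\<lambda>t. h t * of_real (t * sin (rho_t p k * t)))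
       + a * integral {0..x} (\<lambda>t. h t * cos_remainder k t)"
proof -
  have "h t * (a * cos (\<rho> k * of_real t) + b * of_real (cos (rho_t p k * t)))
     = (a + b) * (h t * of_real (cos (rho_t p k * t))) - a * dev k * (h t * of_real (t * sin (rho_t p k * t)))
       + a * (h t * cos_remainder k t)" for t
    unfolding cos_remainder_def by (simp add: algebra_simps)
  moreover note int = integrable_on_subinterval_0_pi[OF _ x]
  ultimately show ?thesis
    using hc continuous_on_cos_remainder
    by (simp add: integral_add integral_diff int integrable_on_mult_right continuous_intros del: integral_mult)
qed

lemma norm_integral_cos_remainder_le:
  fixes h :: "real \<Rightarrow> complex"
  assumes hc: "continuous_on {0..pi} h" and x: "x \<in> {0..pi}" and k: "1 \<le> k"
  shows "norm (integral {0..x} (\<lambda>t. h t * cos_remainder k t))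
      \<le> remainder_const \<Omega> * integral {0..x} (\<lambda>t. norm (h t)) * (norm (dev k))\<^sup>2"
proof -
  have "norm (integral {0..x} (\<lambda>t. h t * cos_remainder k t))
      \<le> integral {0..x} (\<lambda>t. remainder_const \<Omega> * (norm (dev k))\<^sup>2 * norm (h t))"
  proof (rule integral_norm_bound_integral)
    show "(\<lambda>t. h t * cos_remainder k t) integrable_on {0..x}"
      using hc x by (intro integrable_on_subinterval_0_pi continuous_intros continuous_on_cos_remainder)
    show "(\<lambda>t. remainder_const \<Omega> * (norm (dev k))\<^sup>2 * norm (h t)) integrable_on {0..x}"
      using hc x by (intro integrable_on_subinterval_0_pi continuous_intros)
    fix t
    assume "t \<in> {0..x}"
    then have "t \<in> {0..pi}"
      using x by auto
    then show "norm (h t * cos_remainder k t) \<le> remainder_const \<Omega> * (norm (dev k))\<^sup>2 * norm (h t)"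
      using norm_cos_remainder_le[OF k] by (simp add: norm_mult mult_left_mono mult.commute)
  qed
  then show ?thesis
    by (simp add: algebra_simps)
qed

lemma norm_integral_perturbed_cos_le:
  fixes h :: "real \<Rightarrow> complex"
  assumes hc: "continuous_on {0..pi} h" and x: "x \<in> {0..pi}" and k: "1 \<le> k"
    and a: "norm a \<le> \<Lambda>" and ab: "norm (a + b) \<le> \<Lambda> * \<xi> k"
  shows "norm (integral {0..x} (\<lambda>t. h t * (a * cos (\<rho> k * of_real t) + b * of_real (cos (rho_t p k * t)))))
     \<le> \<Lambda> * (\<xi> k * norm (integral {0..x} (\<lambda>t. h t * of_real (cos (rho_t p k * t))))
          + norm (dev k) * norm (integral {0..x} (\<lambda>t. h t * of_real (t * sin (rho_t p k * t))))
          + remainder_const \<Omega> * integral {0..x} (\<lambda>t. norm (h t)) * (norm (dev k))\<^sup>2)"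
proof -
  have \<Lambda>: "0 \<le> \<Lambda>"
    using a norm_ge_zero order_trans by blast
  have rem: "norm (integral {0..x} (\<lambda>t. h t * cos_remainder k t))
      \<le> remainder_const \<Omega> * integral {0..x} (\<lambda>t. norm (h t)) * (norm (dev k))\<^sup>2"
    by (rule norm_integral_cos_remainder_le[OF hc x k])
  define \<beta> where "\<beta> = integral {0..x} (\<lambda>t. h t * of_real (cos (rho_t p k * t)))"
  define \<gamma> where "\<gamma> = integral {0..x} (\<lambda>t. h t * of_real (t * sin (rho_t p k * t)))"
  define \<delta> where "\<delta> = integral {0..x} (\<lambda>t. h t * cos_remainder k t)"
  have "norm ((a + b) * \<beta> - a * dev k * \<gamma> + a * \<delta>)
      \<le> norm ((a + b) * \<beta>) + norm (a * dev k * \<gamma>) + norm (a * \<delta>)"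
    using norm_triangle_ineq[of "(a + b) * \<beta> - a * dev k * \<gamma>" "a * \<delta>"]
      norm_triangle_ineq4[of "(a + b) * \<beta>" "a * dev k * \<gamma>"] by linarith
  also have "\<dots> = norm (a + b) * norm \<beta> + norm a * (norm (dev k) * norm \<gamma>) + norm a * norm \<delta>"
    by (simp add: norm_mult)
  also have "\<dots> \<le> (\<Lambda> * \<xi> k) * norm \<beta> + \<Lambda> * (norm (dev k) * norm \<gamma>)
      + \<Lambda> * (remainder_const \<Omega> * integral {0..x} (\<lambda>t. norm (h t)) * (norm (dev k))\<^sup>2)"
    using a ab rem \<Lambda> xi_nonneg[OF k] unfolding \<delta>_def by (intro add_mono mult_mono) auto
  finally show ?thesis
    unfolding integral_perturbed_cos_eq[OF hc x] \<beta>_def[symmetric] \<gamma>_def[symmetric] \<delta>_def[symmetric]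
    by (simp add: algebra_simps)
qed

lemma sum_norm_integral_perturbed_cos_le:
  fixes h :: "real \<Rightarrow> complex" and u v :: "nat \<Rightarrow> complex"
  assumes fin: "finite K" and K: "K \<subseteq> {1..}" and hc: "continuous_on {0..pi} h" and x: "x \<in> {0..pi}"
    and \<mu>: "0 < \<mu>" and \<Lambda>: "0 \<le> \<Lambda>"
    and u: "\<And>k. k \<in> K \<Longrightarrow> norm (u k) \<le> \<Lambda>"
    and uv: "\<And>k. k \<in> K \<Longrightarrow> norm (u k + v k) \<le> \<Lambda> * \<xi> k"
  shows "(\<Sum>k\<in>K. norm (integral {0..x}
            (\<lambda>t. h t * (u k * cos (\<rho> k * of_real t) + v k * of_real (cos (rho_t p k * t))))))
     \<le> \<Lambda> * (\<mu> * \<Omega>\<^sup>2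
          + ((real p + 1) * (integral {0..x} (\<lambda>t. norm (h t)))\<^sup>2
              + pi ^ 3 * integral {0..x} (\<lambda>t. (norm (h t))\<^sup>2)) / (2 * \<mu>)
          + remainder_const \<Omega> * integral {0..x} (\<lambda>t. norm (h t)) * \<Omega>\<^sup>2)"
proof -
  define N1 where "N1 = integral {0..x} (\<lambda>t. norm (h t))"
  define N2 where "N2 = integral {0..x} (\<lambda>t. (norm (h t))\<^sup>2)"
  define \<beta> where "\<beta> k = norm (integral {0..x} (\<lambda>t. h t * of_real (cos (rho_t p k * t))))" for k
  define \<gamma> where "\<gamma> k = norm (integral {0..x} (\<lambda>t. h t * of_real (t * sin (rho_t p k * t))))" for k
  have N1: "0 \<le> N1"
    unfolding N1_def using hc x by (intro integral_nonneg integrable_on_subinterval_0_pi continuous_intros) auto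
  have "(\<Sum>k\<in>K. norm (integral {0..x}
            (\<lambda>t. h t * (u k * cos (\<rho> k * of_real t) + v k * of_real (cos (rho_t p k * t))))))
      \<le> (\<Sum>k\<in>K. \<Lambda> * (\<xi> k * \<beta> k + norm (dev k) * \<gamma> k + remainder_const \<Omega> * N1 * (norm (dev k))\<^sup>2))"
    unfolding \<beta>_def \<gamma>_def N1_def
    using K u uv by (intro sum_mono norm_integral_perturbed_cos_le[OF hc x]) auto
  also have "\<dots> = \<Lambda> * ((\<Sum>k\<in>K. \<xi> k * \<beta> k) + (\<Sum>k\<in>K. norm (dev k) * \<gamma> k)
      + remainder_const \<Omega> * N1 * (\<Sum>k\<in>K. (norm (dev k))\<^sup>2))"
    by (simp only: sum_distrib_left[symmetric] sum.distrib)
  also have "\<dots> \<le> \<Lambda> * ((\<mu> / 2 * \<Omega>\<^sup>2 + (\<Sum>k\<in>K. (\<beta> k)\<^sup>2) / (2 * \<mu>))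
      + (\<mu> / 2 * \<Omega>\<^sup>2 + (\<Sum>k\<in>K. (\<gamma> k)\<^sup>2) / (2 * \<mu>)) + remainder_const \<Omega> * N1 * \<Omega>\<^sup>2)"
  proof -
    have "(\<Sum>k\<in>K. \<xi> k * \<beta> k) \<le> \<mu> / 2 * \<Omega>\<^sup>2 + (\<Sum>k\<in>K. (\<beta> k)\<^sup>2) / (2 * \<mu>)"
      by (rule sum_mult_le_weighted_squares[OF \<mu> sum_xi_square_le[OF fin K]])
    moreover have "(\<Sum>k\<in>K. norm (dev k) * \<gamma> k) \<le> \<mu> / 2 * \<Omega>\<^sup>2 + (\<Sum>k\<in>K. (\<gamma> k)\<^sup>2) / (2 * \<mu>)"
      by (rule sum_mult_le_weighted_squares[OF \<mu> sum_dev_square_le[OF fin K]])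
    moreover have "remainder_const \<Omega> * N1 * (\<Sum>k\<in>K. (norm (dev k))\<^sup>2) \<le> remainder_const \<Omega> * N1 * \<Omega>\<^sup>2"
      using sum_dev_square_le[OF fin K] N1 remainder_const_nonneg by (intro mult_left_mono) auto
    ultimately show ?thesis
      using \<Lambda> by (intro mult_left_mono) auto
  qed
  also have "\<dots> \<le> \<Lambda> * (\<mu> * \<Omega>\<^sup>2 + ((real p + 1) * N1\<^sup>2 + pi ^ 3 * N2) / (2 * \<mu>)
      + remainder_const \<Omega> * N1 * \<Omega>\<^sup>2)"
  proof -
    have "(\<Sum>k\<in>K. (\<beta> k)\<^sup>2) + (\<Sum>k\<in>K. (\<gamma> k)\<^sup>2) \<le> (real p + 1) * N1\<^sup>2 + pi ^ 3 * N2"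
      unfolding \<beta>_def \<gamma>_def N1_def N2_def by (rule sum_norm_integral_rho_t_square_le[OF fin K hc x])
    then have "(\<Sum>k\<in>K. (\<beta> k)\<^sup>2) / (2 * \<mu>) + (\<Sum>k\<in>K. (\<gamma> k)\<^sup>2) / (2 * \<mu>)
        \<le> ((real p + 1) * N1\<^sup>2 + pi ^ 3 * N2) / (2 * \<mu>)"
      using \<mu> by (simp add: add_divide_distrib[symmetric] divide_right_mono)
    then show ?thesis
      using \<Lambda> by (intro mult_left_mono) auto
  qed
  finally show ?thesis
    unfolding N1_def N2_def .
qed

lemma sum_perturbed_cos_decomposition:
  assumes "finite K"
  shows "(\<Sum>k\<in>K. u k * cos (\<rho> k * of_real t) + v k * of_real (cos (rho_t p k * t)))
    = (\<Sum>k\<in>{k\<in>K. p + 1 < k}. (u k + v k) * of_real (cos (rho_t p k * t)))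
      - of_real t * (\<Sum>k\<in>{k\<in>K. p + 1 < k}. (u k * dev k) * of_real (sin (rho_t p k * t)))
      + (\<Sum>k\<in>{k\<in>K. k \<le> p + 1}. u k + v k)
      + (\<Sum>k\<in>K. u k * cos_remainder k t)"
proof -
  have "u k * cos (\<rho> k * of_real t) + v k * of_real (cos (rho_t p k * t))
      = (u k + v k) * of_real (cos (rho_t p k * t))
        - of_real t * ((u k * dev k) * of_real (sin (rho_t p k * t))) + u k * cos_remainder k t" for k
    unfolding cos_remainder_def by (simp add: algebra_simps)
  then have "(\<Sum>k\<in>K. u k * cos (\<rho> k * of_real t) + v k * of_real (cos (rho_t p k * t)))
      = (\<Sum>k\<in>K. (u k + v k) * of_real (cos (rho_t p k * t)))
        - of_real t * (\<Sum>k\<in>K. (u k * dev k) * of_real (sin (rho_t p k * t)))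
        + (\<Sum>k\<in>K. u k * cos_remainder k t)"
    by (simp add: sum.distrib sum_subtractf sum_distrib_left)
  moreover have "(\<Sum>k\<in>K. (u k + v k) * of_real (cos (rho_t p k * t)))
      = (\<Sum>k\<in>{k\<in>K. p + 1 < k}. (u k + v k) * of_real (cos (rho_t p k * t))) + (\<Sum>k\<in>{k\<in>K. k \<le> p + 1}. u k + v k)"
  proof -
    have "(\<Sum>k\<in>{k\<in>K. k \<le> p + 1}. (u k + v k) * of_real (cos (rho_t p k * t))) = (\<Sum>k\<in>{k\<in>K. k \<le> p + 1}. u k + v k)"
      by (rule sum.cong) (simp_all add: rho_t_eq_0)
    then show ?thesis
      using sum_split_at[OF assms, of "\<lambda>k. (u k + v k) * of_real (cos (rho_t p k * t))" "p + 1"] by simp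
  qed
  moreover have "(\<Sum>k\<in>K. (u k * dev k) * of_real (sin (rho_t p k * t)))
      = (\<Sum>k\<in>{k\<in>K. p + 1 < k}. (u k * dev k) * of_real (sin (rho_t p k * t)))"
    using sum_split_at[OF assms, of "\<lambda>k. (u k * dev k) * of_real (sin (rho_t p k * t))" "p + 1"]
    by (simp add: rho_t_eq_0)
  ultimately show ?thesis
    by (simp add: algebra_simps)
qed

lemma sum_norm_square_le_of_norm_le_xi:
  assumes "finite K" "K \<subseteq> {1..}" "0 \<le> \<Lambda>" "\<And>k. k \<in> K \<Longrightarrow> norm (c k) \<le> \<Lambda> * \<xi> k"
  shows "(\<Sum>k\<in>K. (norm (c k))\<^sup>2) \<le> \<Lambda>\<^sup>2 * \<Omega>\<^sup>2"
proof -
  have "(\<Sum>k\<in>K. (norm (c k))\<^sup>2) \<le> (\<Sum>k\<in>K. \<Lambda>\<^sup>2 * (\<xi> k)\<^sup>2)"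
    using assms by (intro sum_mono) (auto simp flip: power_mult_distrib intro!: power_mono)
  also have "\<dots> \<le> \<Lambda>\<^sup>2 * \<Omega>\<^sup>2"
    using sum_xi_square_le[OF assms(1,2)] by (simp add: sum_distrib_left[symmetric] mult_left_mono)
  finally show ?thesis .
qed

lemma norm_sum_low_modes_le:
  assumes "K \<subseteq> {1..}" "0 \<le> \<Lambda>" "\<And>k. k \<in> K \<Longrightarrow> norm (c k) \<le> \<Lambda> * \<xi> k"
  shows "norm (\<Sum>k\<in>{k\<in>K. k \<le> p + 1}. c k) \<le> (real p + 1) * (\<Lambda> * \<Omega>)"
proof -
  have "norm (c k) \<le> \<Lambda> * \<Omega>" if "k \<in> K" for k
    using order_trans[OF assms(3)[OF that] mult_left_mono[OF xi_le_Omega assms(2)]] that assms(1) by auto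
  then have "norm (\<Sum>k\<in>{k\<in>K. k \<le> p + 1}. c k) \<le> (\<Sum>k\<in>{k\<in>K. k \<le> p + 1}. \<Lambda> * \<Omega>)"
    by (intro order_trans[OF norm_sum] sum_mono) auto
  also have "\<dots> \<le> (real p + 1) * (\<Lambda> * \<Omega>)"
    using card_filter_atMost_le[OF assms(1), of "p + 1"] assms(2) Omega_pos by (simp add: mult_right_mono)
  finally show ?thesis .
qed

lemma norm_sum_cos_remainder_le:
  assumes "finite K" "K \<subseteq> {1..}" "t \<in> {0..pi}" "0 \<le> \<Lambda>" "\<And>k. k \<in> K \<Longrightarrow> norm (u k) \<le> \<Lambda>"
  shows "norm (\<Sum>k\<in>K. u k * cos_remainder k t) \<le> \<Lambda> * remainder_const \<Omega> * \<Omega>\<^sup>2"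
proof -
  have "norm (\<Sum>k\<in>K. u k * cos_remainder k t) \<le> (\<Sum>k\<in>K. \<Lambda> * (remainder_const \<Omega> * (norm (dev k))\<^sup>2))"
    using assms by (intro order_trans[OF norm_sum] sum_mono)
      (auto simp: norm_mult intro!: mult_mono norm_cos_remainder_le)
  also have "\<dots> \<le> \<Lambda> * remainder_const \<Omega> * \<Omega>\<^sup>2"
    using sum_dev_square_le[OF assms(1,2)] assms(4) remainder_const_nonneg
    by (simp add: sum_distrib_left[symmetric] mult.assoc mult_left_mono)
  finally show ?thesis .
qed

lemma integral_norm_perturbed_cos_sum_square_le:
  fixes u v :: "nat \<Rightarrow> complex"
  assumes fin: "finite K" and K: "K \<subseteq> {1..}" and x: "x \<in> {0..pi}" and \<Lambda>: "0 \<le> \<Lambda>"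
    and u: "\<And>k. k \<in> K \<Longrightarrow> norm (u k) \<le> \<Lambda>"
    and uv: "\<And>k. k \<in> K \<Longrightarrow> norm (u k + v k) \<le> \<Lambda> * \<xi> k"
  shows "integral {0..x}
      (\<lambda>t. (norm (\<Sum>k\<in>K. u k * cos (\<rho> k * of_real t) + v k * of_real (cos (rho_t p k * t))))\<^sup>2)
     \<le> \<Lambda>\<^sup>2 * l2_const p \<Omega>"
proof -
  define P where "P t = (\<Sum>k\<in>{k\<in>K. p + 1 < k}. (u k + v k) * of_real (cos (rho_t p k * t)))" for t
  define Q where "Q t = of_real t * (\<Sum>k\<in>{k\<in>K. p + 1 < k}. (u k * dev k) * of_real (sin (rho_t p k * t)))" for t
  define Z where "Z = (\<Sum>k\<in>{k\<in>K. k \<le> p + 1}. u k + v k)"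
  define R where "R t = (\<Sum>k\<in>K. u k * cos_remainder k t)" for t
  note int = integrable_on_subinterval_0_pi[OF _ x]
  have cont: "continuous_on {0..pi} P" "continuous_on {0..pi} Q" "continuous_on {0..pi} R"
    unfolding P_def Q_def R_def by (intro continuous_intros continuous_on_cos_remainder)+
  have high: "finite {k\<in>K. p + 1 < k}" "{k\<in>K. p + 1 < k} \<subseteq> {1..}"
    using fin K by auto
  have "norm (u k * dev k) \<le> \<Lambda> * \<xi> k" if "k \<in> K" for k
    using that K u[OF that] norm_dev_le_xi \<Lambda> by (auto simp: norm_mult intro!: mult_mono)
  then have P: "integral {0..x} (\<lambda>t. (norm (P t))\<^sup>2) \<le> pi / 2 * (\<Lambda>\<^sup>2 * \<Omega>\<^sup>2)"
    and Q: "integral {0..x} (\<lambda>t. (norm (Q t))\<^sup>2) \<le> pi ^ 3 / 2 * (\<Lambda>\<^sup>2 * \<Omega>\<^sup>2)"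
    unfolding P_def Q_def using uv
    by (intro order_trans[OF integral_norm_sum_rho_t_cos_square_le[OF fin x]]
        order_trans[OF integral_norm_t_sum_rho_t_sin_square_le[OF fin x]]
        mult_left_mono sum_norm_square_le_of_norm_le_xi[OF high \<Lambda>]; simp)+
  have Z: "(norm Z)\<^sup>2 \<le> ((real p + 1) * (\<Lambda> * \<Omega>))\<^sup>2"
    unfolding Z_def using K \<Lambda> uv by (intro power_mono norm_sum_low_modes_le) auto
  have R: "(norm (R t))\<^sup>2 \<le> (\<Lambda> * remainder_const \<Omega> * \<Omega>\<^sup>2)\<^sup>2" if "t \<in> {0..pi}" for t
    unfolding R_def using fin K that \<Lambda> u by (intro power_mono norm_sum_cos_remainder_le) auto
  have "integral {0..x}
      (\<lambda>t. (norm (\<Sum>k\<in>K. u k * cos (\<rho> k * of_real t) + v k * of_real (cos (rho_t p k * t))))\<^sup>2)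
     \<le> integral {0..x} (\<lambda>t. 4 * ((norm (P t))\<^sup>2 + (norm (- Q t))\<^sup>2 + (norm Z)\<^sup>2 + (norm (R t))\<^sup>2))"
    unfolding sum_perturbed_cos_decomposition[OF fin] P_def[symmetric] Q_def[symmetric]
      Z_def[symmetric] R_def[symmetric] diff_conv_add_uminus
    by (intro integral_le int continuous_intros cont norm_add4_square_le)
  also have "\<dots> = 4 * (integral {0..x} (\<lambda>t. (norm (P t))\<^sup>2) + integral {0..x} (\<lambda>t. (norm (Q t))\<^sup>2)
      + integral {0..x} (\<lambda>t. (norm Z)\<^sup>2) + integral {0..x} (\<lambda>t. (norm (R t))\<^sup>2))"
    by (simp add: integral_add int continuous_intros cont del: integral_mult)
  also have "\<dots> \<le> 4 * (pi / 2 * (\<Lambda>\<^sup>2 * \<Omega>\<^sup>2) + pi ^ 3 / 2 * (\<Lambda>\<^sup>2 * \<Omega>\<^sup>2)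
      + pi * ((real p + 1) * (\<Lambda> * \<Omega>))\<^sup>2 + pi * (\<Lambda> * remainder_const \<Omega> * \<Omega>\<^sup>2)\<^sup>2)"
    using P Q Z R x by (intro mult_left_mono add_mono integral_le_pi_mult_bound continuous_intros cont) auto
  also have "\<dots> \<le> \<Lambda>\<^sup>2 * l2_const p \<Omega>"
    by (rule l2_const_ge)
  finally show ?thesis .
qed

end

section \<open>The sequence Q~(x) T^-1 f\<close>

lemma psqrt_of_real_square: "0 \<le> r \<Longrightarrow> psqrt (of_real (r\<^sup>2)) = of_real r"
  unfolding psqrt_def by (simp add: csqrt_of_real)

lemma psqrt_lamS_model: "psqrt (lamS p lam 1 n) = of_real (rho_t p n)"
  unfolding lamS_def using psqrt_of_real_square[OF rho_t_nonneg] by simp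

lemma alpha_t_bounds: "0 \<le> alpha_t p k \<and> alpha_t p k \<le> 1"
  unfolding alpha_t_def using pi_gt3 by (auto simp: field_simps)

lemma norm_le_m_norm:
  assumes "in_m f0 f1" "1 \<le> k"
  shows "norm (f0 k) \<le> m_norm f0 f1 \<and> norm (f1 k) \<le> m_norm f0 f1"
proof -
  obtain M0 M1 where "\<And>n. n \<in> {1..} \<Longrightarrow> norm (f0 n) \<le> M0" "\<And>n. n \<in> {1..} \<Longrightarrow> norm (f1 n) \<le> M1"
    using assms(1) unfolding in_m_def bdd_above_def by auto
  then have "bdd_above ((\<lambda>n. max (norm (f0 n)) (norm (f1 n))) ` {1..})"
    by (intro bdd_aboveI2[where M = "max M0 M1"] max.mono)
  then have "max (norm (f0 k)) (norm (f1 k)) \<le> m_norm f0 f1"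
    unfolding m_norm_def using assms(2) by (intro cSUP_upper) auto
  then show ?thesis
    by simp
qed

lemma xi_square_summable_on:
  assumes "in_Sp p lam al"
  shows "(\<lambda>n. (xi p lam al n)\<^sup>2) summable_on {1..}"
proof -
  let ?A = "\<lambda>n. (norm (psqrt (lam n) - complex_of_real (real n - real p - 1)))\<^sup>2"
  let ?B = "\<lambda>n. (norm (al n - complex_of_real (2 / pi)))\<^sup>2"
  have "?A summable_on {1..}" "?B summable_on {1..}"
    using assms unfolding in_Sp_def by auto
  then have "(\<lambda>n. 2 * ?A n + 2 * ?B n) summable_on {p + 2..}"
    by (intro summable_on_add summable_on_cmult_right) (auto elim: summable_on_subset)
  then have "(\<lambda>n. (xi p lam al n)\<^sup>2) summable_on {p + 2..}"
  proof (rule summable_on_comparison_test)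
    fix n
    assume "n \<in> {p + 2..}"
    then have "xi p lam al n = sqrt (?A n) + sqrt (?B n)"
      unfolding xi_def rho_t_def alpha_t_def by auto
    moreover have "(sqrt (?A n) + sqrt (?B n))\<^sup>2 \<le> 2 * ?A n + 2 * ?B n"
      using sum_squares_bound[of "sqrt (?A n)" "sqrt (?B n)"] by (simp add: power2_sum)
    ultimately show "(xi p lam al n)\<^sup>2 \<le> 2 * ?A n + 2 * ?B n"
      by simp
  qed simp
  moreover have "{1..p + 1} \<union> {p + 2..} = {1::nat..}"
    by auto
  ultimately show ?thesis
    using summable_on_union[of _ "{1..p + 1}"] by fastforce
qed

lemma sum_xi_square_le_of_in_B:
  assumes B: "in_B p \<Omega> lam al" and "finite K" "K \<subseteq> {1..}"
  shows "(\<Sum>k\<in>K. (xi p lam al k)\<^sup>2) \<le> \<Omega>\<^sup>2"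
proof -
  have sum: "(\<lambda>n. (xi p lam al n)\<^sup>2) summable_on {1..}"
    using B unfolding in_B_def by (intro xi_square_summable_on) auto
  have "(\<Sum>k\<in>K. (xi p lam al k)\<^sup>2) \<le> (\<Sum>\<^sub>\<infinity>n\<in>{1..}. (xi p lam al n)\<^sup>2)"
    using assms by (intro finite_sum_le_infsum[OF sum]) auto
  also have "\<dots> = (sqrt (\<Sum>\<^sub>\<infinity>n\<in>{1..}. (xi p lam al n)\<^sup>2))\<^sup>2"
    by (simp add: infsum_nonneg)
  also have "\<dots> \<le> \<Omega>\<^sup>2"
    using B unfolding in_B_def by (intro power_mono) (auto simp: infsum_nonneg)
  finally show ?thesis .
qed

lemma perturbed_frequencies_of_in_B:
  assumes "0 < \<Omega>" "in_B p \<Omega> lam al"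
  shows "perturbed_frequencies p \<Omega> (\<lambda>k. psqrt (lam k)) (xi p lam al)"
  using assms sum_xi_square_le_of_in_B by unfold_locales (auto simp: xi_def)

definition qQT_summand :: "nat \<Rightarrow> (nat \<Rightarrow> complex) \<Rightarrow> (nat \<Rightarrow> complex) \<Rightarrow> real
    \<Rightarrow> (nat \<Rightarrow> complex) \<Rightarrow> (nat \<Rightarrow> complex) \<Rightarrow> nat \<Rightarrow> nat \<Rightarrow> nat \<Rightarrow> complex" where
  "qQT_summand p lam al x f0 f1 n i k =
     Qt p lam al x n i k 0 * (rho_hat p lam k * f0 k + f1 k) - Qt p lam al x n i k 1 * f1 k"

lemma qQT_eq_infsum: "qQT p lam al x f0 f1 n i = (\<Sum>\<^sub>\<infinity>k\<in>{1..}. qQT_summand p lam al x f0 f1 n i k)"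
  unfolding qQT_def qQT_summand_def ..

definition l1_const :: "nat \<Rightarrow> real \<Rightarrow> real" where
  "l1_const p \<Omega> = (pi + (2 + \<Omega>) ^ 4 * l2_const p \<Omega>) / 2"

definition q_diff_const :: "nat \<Rightarrow> real \<Rightarrow> real" where
  "q_diff_const p \<Omega> = \<Omega>\<^sup>2
     + ((real p + 1) * (l1_const p \<Omega>)\<^sup>2 + pi ^ 3 * ((2 + \<Omega>) ^ 4 * l2_const p \<Omega>)) / 2
     + remainder_const \<Omega> * l1_const p \<Omega> * \<Omega>\<^sup>2"

locale spectral_data = perturbed_frequencies p \<Omega> "\<lambda>k. psqrt (lam k)" "xi p lam al"
  for p :: nat and \<Omega> :: real and lam al :: "nat \<Rightarrow> complex" +
  fixes f0 f1 :: "nat \<Rightarrow> complex"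
  assumes in_m: "in_m f0 f1"
begin

text \<open>weight_data k and weight_model k are alpha_{k0} (T^-1 f)_{k0} and - alpha_{k1} (T^-1 f)_{k1}.\<close>

definition weight_data :: "nat \<Rightarrow> complex" where
  "weight_data k = al k * (rho_hat p lam k * f0 k + f1 k)"

definition weight_model :: "nat \<Rightarrow> complex" where
  "weight_model k = - of_real (alpha_t p k) * f1 k"

definition kernel :: "nat \<Rightarrow> real \<Rightarrow> complex" where
  "kernel k t = weight_data k * cos (psqrt (lam k) * of_real t) + weight_model k * of_real (cos (rho_t p k * t))"

lemma continuous_on_kernel: "continuous_on S (kernel k)"
  unfolding kernel_def by (intro continuous_intros)

lemma qQT_summand_eq_integral:
  "qQT_summand p lam al x f0 f1 n i k = integral {0..x} (\<lambda>t. cos (psqrt (lamS p lam i n) * of_real t) * kernel k t)"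
proof -
  define \<psi> where "\<psi> t = cos (psqrt (lamS p lam i n) * of_real t)" for t
  have int: "(\<lambda>t. \<psi> t * cos (z * of_real t)) integrable_on {0..x}" for z
    unfolding \<psi>_def by (intro integrable_continuous_interval continuous_intros)
  have "Dt x (lamS p lam i n) (lamS p lam 0 k) = integral {0..x} (\<lambda>t. \<psi> t * cos (psqrt (lam k) * of_real t))"
    unfolding Dt_def \<psi>_def lamS_def by simp
  moreover have "Dt x (lamS p lam i n) (lamS p lam 1 k) = integral {0..x} (\<lambda>t. \<psi> t * cos (of_real (rho_t p k) * of_real t))"
    unfolding Dt_def \<psi>_def psqrt_lamS_model ..
  ultimately have "qQT_summand p lam al x f0 f1 n i k
      = weight_data k * integral {0..x} (\<lambda>t. \<psi> t * cos (psqrt (lam k) * of_real t))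
        + weight_model k * integral {0..x} (\<lambda>t. \<psi> t * cos (of_real (rho_t p k) * of_real t))"
    unfolding qQT_summand_def Qt_def weight_data_def weight_model_def alS_def by (simp add: algebra_simps)
  also have "\<dots> = integral {0..x} (\<lambda>t. weight_data k * (\<psi> t * cos (psqrt (lam k) * of_real t))
        + weight_model k * (\<psi> t * cos (of_real (rho_t p k) * of_real t)))"
    by (simp only: integral_add[OF integrable_on_mult_right[OF int] integrable_on_mult_right[OF int]]
        integral_mult_right)
  also have "\<dots> = integral {0..x} (\<lambda>t. \<psi> t * kernel k t)"
    unfolding kernel_def by (simp add: algebra_simps flip: cos_of_real)
  finally show ?thesis
    unfolding \<psi>_def .
qed

lemma m_norm_nonneg: "0 \<le> m_norm f0 f1"
  using norm_le_m_norm[OF in_m, of 1] norm_ge_zero[of "f0 1"] by linarith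

lemma norm_al_le:
  assumes "1 \<le> k"
  shows "norm (al k) \<le> 1 + \<Omega>"
proof -
  have "norm (al k) \<le> norm (of_real (alpha_t p k) :: complex) + norm (al k - of_real (alpha_t p k))"
    by (metis add.commute diff_add_cancel norm_triangle_ineq)
  moreover have "norm (al k - of_real (alpha_t p k)) \<le> \<Omega>"
    using xi_le_Omega[OF assms] norm_ge_zero[of "psqrt (lam k) - of_real (rho_t p k)"]
    unfolding xi_def by linarith
  ultimately show ?thesis
    using alpha_t_bounds[of p k] by simp
qed

lemma norm_weight_data_le:
  assumes k: "1 \<le> k"
  shows "norm (weight_data k) \<le> (2 + \<Omega>)\<^sup>2 * m_norm f0 f1"
proof -
  have "norm (rho_hat p lam k * f0 k + f1 k) \<le> norm (rho_hat p lam k) * norm (f0 k) + norm (f1 k)"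
    using norm_triangle_ineq[of "rho_hat p lam k * f0 k" "f1 k"] by (simp add: norm_mult)
  also have "\<dots> \<le> \<Omega> * m_norm f0 f1 + m_norm f0 f1"
    using norm_dev_le_Omega[OF k] norm_le_m_norm[OF in_m k] Omega_pos
    unfolding dev_def rho_hat_def by (intro add_mono mult_mono) auto
  finally have "norm (weight_data k) \<le> (1 + \<Omega>) * (\<Omega> * m_norm f0 f1 + m_norm f0 f1)"
    unfolding weight_data_def norm_mult using norm_al_le[OF k] Omega_pos by (intro mult_mono) auto
  also have "\<dots> \<le> (2 + \<Omega>)\<^sup>2 * m_norm f0 f1"
    using m_norm_nonneg Omega_pos by (simp add: power2_eq_square algebra_simps mult_left_mono)
  finally show ?thesis .
qed

lemma norm_weight_sum_le:
  assumes k: "1 \<le> k"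
  shows "norm (weight_data k + weight_model k) \<le> (2 + \<Omega>)\<^sup>2 * m_norm f0 f1 * xi p lam al k"
proof -
  have "weight_data k + weight_model k = al k * rho_hat p lam k * f0 k + (al k - of_real (alpha_t p k)) * f1 k"
    unfolding weight_data_def weight_model_def by (simp add: algebra_simps)
  then have "norm (weight_data k + weight_model k)
      \<le> norm (al k) * norm (rho_hat p lam k) * norm (f0 k) + norm (al k - of_real (alpha_t p k)) * norm (f1 k)"
    using norm_triangle_ineq[of "al k * rho_hat p lam k * f0 k" "(al k - of_real (alpha_t p k)) * f1 k"]
    by (simp add: norm_mult)
  also have "\<dots> \<le> (1 + \<Omega>) * xi p lam al k * m_norm f0 f1 + xi p lam al k * m_norm f0 f1"
    using norm_al_le[OF k] norm_dev_le_xi[OF k] norm_le_m_norm[OF in_m k] xi_nonneg[OF k] Omega_pos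
    unfolding dev_def rho_hat_def by (intro add_mono mult_mono) (auto simp: xi_def)
  also have "\<dots> \<le> (2 + \<Omega>)\<^sup>2 * m_norm f0 f1 * xi p lam al k"
    using m_norm_nonneg Omega_pos xi_nonneg[OF k]
    by (simp add: power2_eq_square algebra_simps mult_left_mono mult_right_mono)
  finally show ?thesis .
qed

lemma qQT_summand_summable_on:
  assumes x: "x \<in> {0..pi}"
  shows "qQT_summand p lam al x f0 f1 n i summable_on {1..}"
proof (rule abs_summable_summable, rule nonneg_bdd_above_summable_on)
  define h where "h t = cos (psqrt (lamS p lam i n) * of_real t)" for t
  have hc: "continuous_on {0..pi} h"
    unfolding h_def by (intro continuous_intros)
  show "bdd_above (sum (\<lambda>k. norm (qQT_summand p lam al x f0 f1 n i k)) ` {K. K \<subseteq> {1..} \<and> finite K})"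
  proof (rule bdd_aboveI2)
    fix K :: "nat set"
    assume "K \<in> {K. K \<subseteq> {1..} \<and> finite K}"
    then show "(\<Sum>k\<in>K. norm (qQT_summand p lam al x f0 f1 n i k))
        \<le> (2 + \<Omega>)\<^sup>2 * m_norm f0 f1 * (1 * \<Omega>\<^sup>2
          + ((real p + 1) * (integral {0..x} (\<lambda>t. norm (h t)))\<^sup>2
              + pi ^ 3 * integral {0..x} (\<lambda>t. (norm (h t))\<^sup>2)) / (2 * 1)
          + remainder_const \<Omega> * integral {0..x} (\<lambda>t. norm (h t)) * \<Omega>\<^sup>2)"
      unfolding qQT_summand_eq_integral kernel_def h_def[symmetric]
      using x m_norm_nonneg norm_weight_data_le norm_weight_sum_le
      by (intro sum_norm_integral_perturbed_cos_le hc) auto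
  qed
qed simp

lemma integral_norm_kernel_sum_square_le:
  assumes "finite K" "K \<subseteq> {1..}" "x \<in> {0..pi}"
  shows "integral {0..x} (\<lambda>t. (norm (\<Sum>k\<in>K. kernel k t))\<^sup>2)
    \<le> (2 + \<Omega>) ^ 4 * l2_const p \<Omega> * (m_norm f0 f1)\<^sup>2"
proof -
  have "integral {0..x} (\<lambda>t. (norm (\<Sum>k\<in>K. kernel k t))\<^sup>2) \<le> ((2 + \<Omega>)\<^sup>2 * m_norm f0 f1)\<^sup>2 * l2_const p \<Omega>"
    unfolding kernel_def using assms m_norm_nonneg norm_weight_data_le norm_weight_sum_le
    by (intro integral_norm_perturbed_cos_sum_square_le) auto
  then show ?thesis
    by (simp add: power_mult_distrib algebra_simps)
qed

lemma integral_norm_kernel_sum_le: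
  assumes "finite K" "K \<subseteq> {1..}" "x \<in> {0..pi}" and F: "0 < m_norm f0 f1"
  shows "integral {0..x} (\<lambda>t. norm (\<Sum>k\<in>K. kernel k t)) \<le> l1_const p \<Omega> * m_norm f0 f1"
proof -
  have "integral {0..x} (\<lambda>t. norm (\<Sum>k\<in>K. kernel k t))
      \<le> pi * (m_norm f0 f1 / 2) + integral {0..x} (\<lambda>t. (norm (\<Sum>k\<in>K. kernel k t))\<^sup>2) / (2 * m_norm f0 f1)"
    using assms by (intro integral_norm_le_weighted_squares continuous_intros continuous_on_kernel)
  also have "\<dots> \<le> pi * (m_norm f0 f1 / 2) + (2 + \<Omega>) ^ 4 * l2_const p \<Omega> * (m_norm f0 f1)\<^sup>2 / (2 * m_norm f0 f1)"
    using integral_norm_kernel_sum_square_le[OF assms(1-3)] F by (intro add_left_mono divide_right_mono) auto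
  also have "\<dots> = l1_const p \<Omega> * m_norm f0 f1"
    using F unfolding l1_const_def by (simp add: power2_eq_square field_simps)
  finally show ?thesis .
qed

lemma sum_norm_integral_kernel_diff_le:
  assumes fin: "finite K" "finite N" and K: "K \<subseteq> {1..}" and N: "N \<subseteq> {1..}" and x: "x \<in> {0..pi}"
    and F: "0 < m_norm f0 f1"
  shows "(\<Sum>n\<in>N. norm (integral {0..x} (\<lambda>t. (\<Sum>k\<in>K. kernel k t)
            * (1 * cos (psqrt (lam n) * of_real t) + (- 1) * of_real (cos (rho_t p n * t))))))
      \<le> q_diff_const p \<Omega> * m_norm f0 f1"
proof -
  define F where "F = m_norm f0 f1"
  define H where "H t = (\<Sum>k\<in>K. kernel k t)" for t
  define N1 where "N1 = integral {0..x} (\<lambda>t. norm (H t))"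
  define N2 where "N2 = integral {0..x} (\<lambda>t. (norm (H t))\<^sup>2)"
  have hc: "continuous_on {0..pi} H"
    unfolding H_def by (intro continuous_intros continuous_on_kernel)
  have N1: "0 \<le> N1" "N1 \<le> l1_const p \<Omega> * F"
    unfolding N1_def H_def F_def using fin K x F
    by (auto intro!: integral_nonneg integrable_on_subinterval_0_pi continuous_intros continuous_on_kernel
        integral_norm_kernel_sum_le)
  have N2: "N2 \<le> (2 + \<Omega>) ^ 4 * l2_const p \<Omega> * F\<^sup>2"
    unfolding N2_def H_def F_def by (rule integral_norm_kernel_sum_square_le[OF fin(1) K x])
  \<comment> \<open>weights 1 and -1 with \<Lambda> = 1; taking \<mu> = F makes every term linear in F\<close>
  have "(\<Sum>n\<in>N. norm (integral {0..x} (\<lambda>t. H t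
            * (1 * cos (psqrt (lam n) * of_real t) + (- 1) * of_real (cos (rho_t p n * t))))))
      \<le> 1 * (F * \<Omega>\<^sup>2 + ((real p + 1) * N1\<^sup>2 + pi ^ 3 * N2) / (2 * F) + remainder_const \<Omega> * N1 * \<Omega>\<^sup>2)"
    unfolding N1_def N2_def F_def using fin N hc x F xi_nonneg
    by (intro sum_norm_integral_perturbed_cos_le) auto
  also have "\<dots> \<le> F * \<Omega>\<^sup>2
      + ((real p + 1) * (l1_const p \<Omega> * F)\<^sup>2 + pi ^ 3 * ((2 + \<Omega>) ^ 4 * l2_const p \<Omega> * F\<^sup>2)) / (2 * F)
      + remainder_const \<Omega> * (l1_const p \<Omega> * F) * \<Omega>\<^sup>2"
    using N1 N2 F remainder_const_nonneg unfolding F_def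
    by (auto intro!: add_mono divide_right_mono mult_left_mono mult_right_mono power_mono)
  also have "\<dots> = q_diff_const p \<Omega> * F"
    using F unfolding F_def q_diff_const_def by (simp add: power2_eq_square field_simps)
  finally show ?thesis
    unfolding H_def F_def .
qed

lemma sum_qQT_summand_diff_eq:
  assumes "finite K"
  shows "(\<Sum>k\<in>K. qQT_summand p lam al x f0 f1 n 0 k) - (\<Sum>k\<in>K. qQT_summand p lam al x f0 f1 n 1 k)
    = integral {0..x} (\<lambda>t. (\<Sum>k\<in>K. kernel k t)
        * (1 * cos (psqrt (lam n) * of_real t) + (- 1) * of_real (cos (rho_t p n * t))))"
proof -
  have int: "(\<lambda>t. c t * kernel k t) integrable_on {0..x}" if "continuous_on {0..x} c" for c k
    using that by (intro integrable_continuous_interval continuous_intros continuous_on_kernel)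
  have sum_eq: "(\<Sum>k\<in>K. qQT_summand p lam al x f0 f1 n i k)
      = integral {0..x} (\<lambda>t. cos (psqrt (lamS p lam i n) * of_real t) * (\<Sum>k\<in>K. kernel k t))" for i
    unfolding qQT_summand_eq_integral sum_distrib_left
    using assms by (intro integral_sum[symmetric] int continuous_intros)
  have "cos (psqrt (lamS p lam 1 n) * of_real t) = of_real (cos (rho_t p n * t))" for t
    unfolding psqrt_lamS_model by (simp flip: cos_of_real)
  then show ?thesis
    unfolding sum_eq
    by (subst integral_diff[symmetric])
      (auto simp: lamS_def algebra_simps intro!: integrable_continuous_interval continuous_intros
        continuous_on_kernel)
qed

lemma sum_norm_qQT_diff_le:
  assumes N: "finite N" "N \<subseteq> {1..}" and x: "x \<in> {0..pi}"
  shows "(\<Sum>n\<in>N. norm (qQT p lam al x f0 f1 n 0 - qQT p lam al x f0 f1 n 1)) \<le> q_diff_const p \<Omega> * m_norm f0 f1"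
  unfolding qQT_eq_infsum
proof (rule sum_norm_infsum_diff_le[OF qQT_summand_summable_on[OF x] qQT_summand_summable_on[OF x]])
  fix K :: "nat set"
  assume K: "finite K" "K \<subseteq> {1..}"
  show "(\<Sum>n\<in>N. norm (sum (qQT_summand p lam al x f0 f1 n 0) K - sum (qQT_summand p lam al x f0 f1 n 1) K))
      \<le> q_diff_const p \<Omega> * m_norm f0 f1"
  proof (cases "m_norm f0 f1 = 0")
    case True
    then have "kernel k t = 0" if "k \<in> K" for k t
      using that K norm_weight_data_le norm_weight_sum_le by (force simp: kernel_def)
    then show ?thesis
      unfolding sum_qQT_summand_diff_eq[OF K(1)] using True by simp
  next
    case False
    then show ?thesis
      using K N x m_norm_nonneg
      unfolding sum_qQT_summand_diff_eq[OF K(1)] by (intro sum_norm_integral_kernel_diff_le) auto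
  qed
qed

end

theorem lemma3p4:
  fixes p :: nat and \<Omega> :: real
  assumes "\<Omega> > 0"
  shows "\<exists>C. \<forall>lam al x f0 f1. in_B p \<Omega> lam al \<and> x \<in> {0..pi} \<and> in_m f0 f1 \<longrightarrow>
           (\<lambda>n. norm (qQT p lam al x f0 f1 n 0 - qQT p lam al x f0 f1 n 1)) summable_on {1..} \<and>
           (\<Sum>\<^sub>\<infinity>n\<in>{1..}. norm (qQT p lam al x f0 f1 n 0 - qQT p lam al x f0 f1 n 1))
              \<le> C * m_norm f0 f1"
proof (intro exI allI impI)
  fix lam al f0 f1 :: "nat \<Rightarrow> complex" and x :: real
  assume "in_B p \<Omega> lam al \<and> x \<in> {0..pi} \<and> in_m f0 f1"
  then have B: "in_B p \<Omega> lam al" and x: "x \<in> {0..pi}" and m: "in_m f0 f1"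
    by auto
  interpret spectral_data p \<Omega> lam al f0 f1
    using perturbed_frequencies_of_in_B[OF assms B] m by (simp add: spectral_data_def spectral_data_axioms_def)
  show "(\<lambda>n. norm (qQT p lam al x f0 f1 n 0 - qQT p lam al x f0 f1 n 1)) summable_on {1..} \<and>
      (\<Sum>\<^sub>\<infinity>n\<in>{1..}. norm (qQT p lam al x f0 f1 n 0 - qQT p lam al x f0 f1 n 1))
        \<le> q_diff_const p \<Omega> * m_norm f0 f1"
    using nonneg_finite_sums_bounded_summable[OF _ sum_norm_qQT_diff_le[OF _ _ x]] by auto
qed

end
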